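(* Let $M=I\times F_1\times F_2\times F_3$ with metric $g=-dt^2\oplus\phi^{2p_1}g_{F_1}\oplus\phi^{2p_2}g_{F_2}\oplus\phi^{2p_3}g_{F_3}$, where $I\subset\mathbb{R}$ is an open interval, $\phi:I\to(0,\infty)$ is smooth, $p_1,p_2,p_3\in\mathbb{R}$, and each $(F_i,g_{F_i})$ is a one-dimensional Riemannian manifold; let $\zeta=p_1+p_2+p_3$, $\eta=p_1^2+p_2^2+p_3^2$, and let $\overline\nabla$ be the semi-symmetric metric connection determined by $P=\frac{\partial}{\partial t}$. Then $(M,\overline\nabla)$ has constant scalar curvature $\overline S$ if and only if one of the following holds (with constants $c_0,c_1,c_2$): (1) $\zeta=\eta=0$ and $\overline S=-6$; (2) $\zeta=0$, $\eta\neq0$, and either $\overline S+6=0$ and $\phi$ is constant, or $\overline S+6<0$ and $\phi=c_0e^{\pm\sqrt{-\frac{\overline S+6}{\eta}}\,t}$ (there are no solutions with $\overline S+6>0$); (3) $\zeta\neq0$ and (3a) if $\overline S+6<\frac{9\zeta^2}{\eta+\zeta^2}$: $\phi=\left(c_1e^{\frac{3+\sqrt{9-\frac{(\overline S+6)(\eta+\zeta^2)}{\zeta^2}}}{2}t}+c_2e^{\frac{3-\sqrt{9-\frac{(\overline S+6)(\eta+\zeta^2)}{\zeta^2}}}{2}t}\right)^{\frac{2\zeta}{\eta+\zeta^2}}$; (3b) if $\overline S+6=\frac{9\zeta^2}{\eta+\zeta^2}$: $\phi=\left(c_1e^{\frac32t}+c_2te^{\frac32t}\right)^{\frac{2\zeta}{\eta+\zeta^2}}$;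 (3c) if $\overline S+6>\frac{9\zeta^2}{\eta+\zeta^2}$: $\phi=\left(c_1e^{\frac32t}\cos\left(\frac{\sqrt{-9+\frac{(\overline S+6)(\eta+\zeta^2)}{\zeta^2}}}{2}t\right)+c_2e^{\frac32t}\sin\left(\frac{\sqrt{-9+\frac{(\overline S+6)(\eta+\zeta^2)}{\zeta^2}}}{2}t\right)\right)^{\frac{2\zeta}{\eta+\zeta^2}}$.
   Context: $\nabla$ is the Levi-Civita connection of $g$, $\pi(X)=g(X,P)$, and $\overline\nabla_XY=\nabla_XY+\pi(Y)X-g(X,Y)P$. Conventions: $\overline R(X,Y)Z=\overline\nabla_X\overline\nabla_YZ-\overline\nabla_Y\overline\nabla_XZ-\overline\nabla_{[X,Y]}Z$, $\overline{\mathrm{Ric}}(X,Y)=\sum_k\varepsilon_kg(\overline R(X,E_k)Y,E_k)$, $\overline S=\sum_k\varepsilon_k\overline{\mathrm{Ric}}(E_k,E_k)$ for a local orthonormal frame $(E_k)$, $\varepsilon_k=g(E_k,E_k)$. *)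

theory Defs
  imports "HOL-Analysis.Analysis"
begin

text \<open>Local coordinate calculus on an open subset of R^4 (coordinates x$0 = t, x$1, x$2, x$3).
A metric is given by its components g x i j = g(d_i, d_j) at the point x; a vector field
by its components.  Coordinate vector fields commute, so [d_i,d_j] = 0.\<close>

type_synonym metric4 = "real^4 \<Rightarrow> 4 \<Rightarrow> 4 \<Rightarrow> real"

definition pd :: "(real^4 \<Rightarrow> real) \<Rightarrow> 4 \<Rightarrow> real^4 \<Rightarrow> real" where
  "pd f i x = deriv (\<lambda>s. f (x + s *\<^sub>R axis i 1)) 0"

definition gmat :: "metric4 \<Rightarrow> real^4 \<Rightarrow> real^4^4" where
  "gmat g x = (\<chi> i j. g x i j)"

definition ginv :: "metric4 \<Rightarrow> real^4 \<Rightarrow> 4 \<Rightarrow> 4 \<Rightarrow> real" where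
  "ginv g x i j = matrix_inv (gmat g x) $ i $ j"

text \<open>Christoffel symbols of the Levi-Civita connection: nabla_{d_i} d_j = sum_k Gamma k i j d_k.\<close>
definition christoffel :: "metric4 \<Rightarrow> real^4 \<Rightarrow> 4 \<Rightarrow> 4 \<Rightarrow> 4 \<Rightarrow> real" where
  "christoffel g x k i j = (1/2) * (\<Sum>l\<in>UNIV. ginv g x k l *
      (pd (\<lambda>y. g y j l) i x + pd (\<lambda>y. g y i l) j x - pd (\<lambda>y. g y i j) l x))"

text \<open>Semi-symmetric metric connection
  nablabar_X Y = nabla_X Y + pi(Y) X - g(X,Y) P, with pi(Y) = g(Y,P):
  nablabar_{d_i} d_j = sum_k ssm_conn k i j d_k.\<close>
definition ssm_conn :: "metric4 \<Rightarrow> (real^4 \<Rightarrow> 4 \<Rightarrow> real) \<Rightarrow> real^4 \<Rightarrow> 4 \<Rightarrow> 4 \<Rightarrow> 4 \<Rightarrow> real" where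
  "ssm_conn g P x k i j =
     christoffel g x k i j
     + (\<Sum>l\<in>UNIV. g x j l * P x l) * (if k = i then 1 else 0)
     - g x i j * P x k"

text \<open>Curvature Rbar(X,Y)Z = nablabar_X nablabar_Y Z - nablabar_Y nablabar_X Z - nablabar_[X,Y] Z,
  on coordinate fields: Rbar(d_i,d_j)d_k = sum_l ssm_curv l i j k d_l.\<close>
definition ssm_curv :: "metric4 \<Rightarrow> (real^4 \<Rightarrow> 4 \<Rightarrow> real) \<Rightarrow> real^4 \<Rightarrow> 4 \<Rightarrow> 4 \<Rightarrow> 4 \<Rightarrow> 4 \<Rightarrow> real" where
  "ssm_curv g P x l i j k =
     pd (\<lambda>y. ssm_conn g P y l j k) i x - pd (\<lambda>y. ssm_conn g P y l i k) j x
     + (\<Sum>m\<in>UNIV. ssm_conn g P x m j k * ssm_conn g P x l i m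
                 - ssm_conn g P x m i k * ssm_conn g P x l j m)"

text \<open>Ricci tensor Ricbar(X,Y) = sum_k eps_k g(Rbar(X,E_k)Y,E_k) = trace of Z |-> Rbar(X,Z)Y,
  in coordinates Ricbar_{ij} = sum_k Rbar^k_{ikj}.\<close>
definition ssm_ricci :: "metric4 \<Rightarrow> (real^4 \<Rightarrow> 4 \<Rightarrow> real) \<Rightarrow> real^4 \<Rightarrow> 4 \<Rightarrow> 4 \<Rightarrow> real" where
  "ssm_ricci g P x i j = (\<Sum>k\<in>UNIV. ssm_curv g P x k i k j)"

definition ssm_scalar :: "metric4 \<Rightarrow> (real^4 \<Rightarrow> 4 \<Rightarrow> real) \<Rightarrow> real^4 \<Rightarrow> real" where
  "ssm_scalar g P x = (\<Sum>i\<in>UNIV. \<Sum>j\<in>UNIV. ginv g x i j * ssm_ricci g P x i j)"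

text \<open>The multiply warped metric -dt^2 + phi^(2p1) ds1^2 + phi^(2p2) ds2^2 + phi^(2p3) ds3^2
  (each one-dimensional F_i in arc-length coordinate).\<close>
definition warped_metric :: "(real \<Rightarrow> real) \<Rightarrow> real \<Rightarrow> real \<Rightarrow> real \<Rightarrow> metric4" where
  "warped_metric \<phi> p1 p2 p3 x i j =
     (if i \<noteq> j then 0
      else if i = 0 then -1
      else if i = 1 then \<phi> (x $ 0) powr (2 * p1)
      else if i = 2 then \<phi> (x $ 0) powr (2 * p2)
      else \<phi> (x $ 0) powr (2 * p3))"

definition dt_field :: "real^4 \<Rightarrow> 4 \<Rightarrow> real" where
  "dt_field x k = (if k = 0 then 1 else 0)"

end

theory Submission
  imports Defs
begin

text \<open>In coordinates the connection coefficients of the semi-symmetric connection depend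
  on t alone, and a direct computation gives the scalar curvature as
  -2 zeta v' - (eta + zeta^2) v^2 + 6 zeta v - 6 with v = phi'/phi.
  If zeta = 0 this says that v^2 is constant, so the continuous function v is constant on the
  interval and phi is an exponential.  If zeta != 0, the substitution
  phi = u powr (2 zeta / (eta + zeta^2)) turns the equation into the linear equation
  u'' = 3 u' - (S + 6)(eta + zeta^2) / (4 zeta^2) u, whose solutions are classified by the
  sign of its discriminant.\<close>

section \<open>Linear second-order equations with constant coefficients\<close>

definition solves_ode2 :: "real \<Rightarrow> real \<Rightarrow> real set \<Rightarrow> (real \<Rightarrow> real) \<Rightarrow> (real \<Rightarrow> real) \<Rightarrow> bool" where
  "solves_ode2 a c I W W1 \<longleftrightarrow>
     (\<forall>s\<in>I. (W has_field_derivative W1 s) (at s) \<and> (W1 has_field_derivative a * W1 s - c * W s) (at s))"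

lemma solves_ode2_lincomb:
  assumes "solves_ode2 a c I F F1" "solves_ode2 a c I G G1"
  shows "solves_ode2 a c I (\<lambda>s. x * F s + y * G s) (\<lambda>s. x * F1 s + y * G1 s)"
  unfolding solves_ode2_def
proof (intro ballI conjI)
  fix s assume "s \<in> I"
  then have d: "(F has_field_derivative F1 s) (at s)" "(F1 has_field_derivative a * F1 s - c * F s) (at s)"
    "(G has_field_derivative G1 s) (at s)" "(G1 has_field_derivative a * G1 s - c * G s) (at s)"
    using assms by (auto simp: solves_ode2_def)
  show "((\<lambda>s. x * F s + y * G s) has_field_derivative x * F1 s + y * G1 s) (at s)"
    using DERIV_add[OF DERIV_cmult[OF d(1)] DERIV_cmult[OF d(3)]] .
  have "((\<lambda>s. x * F1 s + y * G1 s) has_field_derivative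
      x * (a * F1 s - c * F s) + y * (a * G1 s - c * G s)) (at s)"
    using DERIV_add[OF DERIV_cmult[OF d(2)] DERIV_cmult[OF d(4)]] .
  then show "((\<lambda>s. x * F1 s + y * G1 s) has_field_derivative
      a * (x * F1 s + y * G1 s) - c * (x * F s + y * G s)) (at s)"
    by (simp add: algebra_simps)
qed

lemma zero_derivative_constant_on_interval:
  fixes f :: "real \<Rightarrow> real"
  assumes "is_interval I" and "\<And>s. s \<in> I \<Longrightarrow> (f has_field_derivative 0) (at s)"
  shows "\<exists>C. \<forall>s\<in>I. f s = C"
proof (rule has_field_derivative_zero_constant)
  show "convex I" using assms(1) by (rule is_interval_convex)
qed (rule has_field_derivative_at_within, use assms(2) in blast)

lemma first_order_linear_ode_on:
  fixes f :: "real \<Rightarrow> real"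
  assumes "is_interval I" and "\<forall>s\<in>I. (f has_field_derivative a * f s) (at s)"
  shows "\<exists>C. \<forall>s\<in>I. f s = C * exp (a * s)"
proof -
  have "((\<lambda>s. f s * exp (- a * s)) has_field_derivative 0) (at s)" if "s \<in> I" for s
  proof -
    have df: "(f has_field_derivative a * f s) (at s)" using assms(2) that by blast
    show ?thesis by (auto intro!: derivative_eq_intros df simp: algebra_simps)
  qed
  then obtain C where C: "\<forall>s\<in>I. f s * exp (- a * s) = C"
    using zero_derivative_constant_on_interval[OF assms(1)] by blast
  have "f s = C * exp (a * s)" if "s \<in> I" for s
  proof -
    have "f s = f s * exp (- a * s) * exp (a * s)" by (simp add: exp_minus field_simps)
    with C that show ?thesis by simp
  qed
  then show ?thesis by blast
qed

text \<open>For c \<le> 0, y1 - sqrt (- c) y solves a first-order linear equation;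
  for c > 0, the energy y1^2 + c y^2 is conserved.\<close>
lemma solves_ode2_no_drift_zero_initial:
  assumes I: "is_interval I" and t0: "t0 \<in> I" and sol: "solves_ode2 0 c I y y1"
    and y0: "y t0 = 0" "y1 t0 = 0"
  shows "\<forall>s\<in>I. y s = 0"
proof -
  have dy: "(y has_field_derivative y1 s) (at s)" "(y1 has_field_derivative - c * y s) (at s)"
    if "s \<in> I" for s using sol that by (auto simp: solves_ode2_def)
  show ?thesis
  proof (cases "c \<le> 0")
    case True
    define q where "q = sqrt (- c)"
    have qq: "q * q = - c" using True by (simp add: q_def)
    have "((\<lambda>s. y1 s - q * y s) has_field_derivative (- q) * (y1 s - q * y s)) (at s)" if "s \<in> I" for s
    proof -
      have "((\<lambda>s. y1 s - q * y s) has_field_derivative - c * y s - q * y1 s) (at s)"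
        using DERIV_diff[OF dy(2)[OF that] DERIV_cmult[OF dy(1)[OF that]]] .
      then show ?thesis by (simp add: algebra_simps qq[symmetric])
    qed
    then obtain C where "\<forall>s\<in>I. y1 s - q * y s = C * exp (- q * s)"
      using first_order_linear_ode_on[OF I] by blast
    moreover from this t0 y0 have "C = 0" by force
    ultimately have "\<forall>s\<in>I. y1 s = q * y s" by auto
    then have "\<forall>s\<in>I. (y has_field_derivative q * y s) (at s)" using dy by auto
    then obtain C' where "\<forall>s\<in>I. y s = C' * exp (q * s)"
      using first_order_linear_ode_on[OF I] by blast
    with t0 y0 show ?thesis by auto
  next
    case False
    have "((\<lambda>s. y1 s * y1 s + c * (y s * y s)) has_field_derivative 0) (at s)" if "s \<in> I" for s
      by (rule DERIV_cong[OF DERIV_add[OF DERIV_mult[OF dy(2) dy(2)]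
            DERIV_cmult[where c = c, OF DERIV_mult[OF dy(1) dy(1)]]]])
        (use that in \<open>simp_all add: algebra_simps\<close>)
    then obtain E where "\<forall>s\<in>I. y1 s * y1 s + c * (y s * y s) = E"
      using zero_derivative_constant_on_interval[OF I] by blast
    with t0 y0 have E: "\<forall>s\<in>I. y1 s * y1 s + c * (y s * y s) = 0" by auto
    show ?thesis
    proof
      fix s assume "s \<in> I"
      have "y1 s * y1 s \<ge> 0" "c * (y s * y s) \<ge> 0" using False by simp_all
      moreover have "y1 s * y1 s + c * (y s * y s) = 0" using E \<open>s \<in> I\<close> by blast
      ultimately have "c * (y s * y s) = 0" by linarith
      then show "y s = 0" using False by simp
    qed
  qed
qed

lemma solves_ode2_remove_drift:
  assumes "solves_ode2 a c I Z Z1"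
  shows "solves_ode2 0 (c - a\<^sup>2 / 4) I (\<lambda>s. exp (- (a / 2) * s) * Z s)
           (\<lambda>s. exp (- (a / 2) * s) * (Z1 s - a / 2 * Z s))"
  unfolding solves_ode2_def
proof (intro ballI conjI)
  fix s assume "s \<in> I"
  then have dZ: "(Z has_field_derivative Z1 s) (at s)" "(Z1 has_field_derivative a * Z1 s - c * Z s) (at s)"
    using assms by (auto simp: solves_ode2_def)
  have de: "((\<lambda>s. exp (- (a / 2) * s)) has_field_derivative - (a / 2) * exp (- (a / 2) * s)) (at s)"
    by (auto intro!: derivative_eq_intros)
  show "((\<lambda>s. exp (- (a / 2) * s) * Z s) has_field_derivative exp (- (a / 2) * s) * (Z1 s - a / 2 * Z s)) (at s)"
    by (rule DERIV_cong[OF DERIV_mult[OF de dZ(1)]]) (simp add: algebra_simps)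
  show "((\<lambda>s. exp (- (a / 2) * s) * (Z1 s - a / 2 * Z s)) has_field_derivative
      0 * (exp (- (a / 2) * s) * (Z1 s - a / 2 * Z s)) - (c - a\<^sup>2 / 4) * (exp (- (a / 2) * s) * Z s)) (at s)"
    by (rule DERIV_cong[OF DERIV_mult[OF de DERIV_diff[OF dZ(2) DERIV_cmult[where c = "a / 2", OF dZ(1)]]]])
      (simp add: field_simps power2_eq_square)
qed

lemma solves_ode2_unique:
  assumes I: "is_interval I" and t0: "t0 \<in> I"
    and W: "solves_ode2 a c I W W1" and F: "solves_ode2 a c I F F1"
    and init: "W t0 = F t0" "W1 t0 = F1 t0"
  shows "\<forall>s\<in>I. W s = F s"
proof -
  have "solves_ode2 a c I (\<lambda>s. 1 * W s + (- 1) * F s) (\<lambda>s. 1 * W1 s + (- 1) * F1 s)"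
    using solves_ode2_lincomb[OF W F] .
  from solves_ode2_no_drift_zero_initial[OF I t0 solves_ode2_remove_drift[OF this]] init
  show ?thesis by simp
qed

lemma solves_ode2_basis:
  assumes I: "is_interval I" and t0: "t0 \<in> I"
    and F: "solves_ode2 a c I F F1" and G: "solves_ode2 a c I G G1"
    and wr: "F t0 * G1 t0 - G t0 * F1 t0 \<noteq> 0"
    and W: "solves_ode2 a c I W W1"
  shows "\<exists>c1 c2. \<forall>s\<in>I. W s = c1 * F s + c2 * G s"
proof -
  define w where "w = F t0 * G1 t0 - G t0 * F1 t0"
  define c1 where "c1 = (W t0 * G1 t0 - G t0 * W1 t0) / w"
  define c2 where "c2 = (F t0 * W1 t0 - W t0 * F1 t0) / w"
  have "c1 * F t0 + c2 * G t0 = ((W t0 * G1 t0 - G t0 * W1 t0) * F t0 + (F t0 * W1 t0 - W t0 * F1 t0) * G t0) / w"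
    by (simp add: c1_def c2_def add_divide_distrib)
  also have "\<dots> = W t0 * w / w" by (simp add: w_def algebra_simps)
  finally have init0: "W t0 = c1 * F t0 + c2 * G t0" using wr by (simp add: w_def)
  have "c1 * F1 t0 + c2 * G1 t0 = ((W t0 * G1 t0 - G t0 * W1 t0) * F1 t0 + (F t0 * W1 t0 - W t0 * F1 t0) * G1 t0) / w"
    by (simp add: c1_def c2_def add_divide_distrib)
  also have "\<dots> = W1 t0 * w / w" by (simp add: w_def algebra_simps)
  finally have init1: "W1 t0 = c1 * F1 t0 + c2 * G1 t0" using wr by (simp add: w_def)
  from init0 init1 solves_ode2_unique[OF I t0 W solves_ode2_lincomb[OF F G]] show ?thesis by blast
qed

lemma solves_ode2I:
  assumes "\<And>s. (W has_field_derivative W1 s) (at s)" "\<And>s. (W1 has_field_derivative W2 s) (at s)"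
    and "\<And>s. W2 s = a * W1 s - c * W s"
  shows "solves_ode2 a c I W W1"
  using assms by (simp add: solves_ode2_def)

lemma exp_solves_ode2:
  assumes "m * m = a * m - c"
  shows "solves_ode2 a c I (\<lambda>s. exp (m * s)) (\<lambda>s. m * exp (m * s))"
proof (rule solves_ode2I)
  show "((\<lambda>s. m * exp (m * s)) has_field_derivative m * m * exp (m * s)) (at s)" for s
    by (auto intro!: derivative_eq_intros)
qed (auto intro!: derivative_eq_intros simp: assms algebra_simps)

lemma t_exp_solves_ode2:
  assumes "4 * c = a * a"
  shows "solves_ode2 a c I (\<lambda>s. s * exp (a / 2 * s)) (\<lambda>s. (1 + a / 2 * s) * exp (a / 2 * s))"
proof (rule solves_ode2I)
  show "((\<lambda>s. s * exp (a / 2 * s)) has_field_derivative (1 + a / 2 * s) * exp (a / 2 * s)) (at s)" for s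
    by (rule derivative_eq_intros refl | simp)+ (simp add: field_simps)
  show "((\<lambda>s. (1 + a / 2 * s) * exp (a / 2 * s)) has_field_derivative (a + a * a / 4 * s) * exp (a / 2 * s)) (at s)" for s
    by (rule derivative_eq_intros refl | simp)+ (simp add: field_simps)
  have c: "c = a * a / 4" using assms by simp
  show "(a + a * a / 4 * s) * exp (a / 2 * s) =
      a * ((1 + a / 2 * s) * exp (a / 2 * s)) - c * (s * exp (a / 2 * s))" for s
    unfolding c by (simp add: field_simps)
qed

lemma exp_cos_solves_ode2:
  assumes "r * r = 4 * c - a * a"
  shows "solves_ode2 a c I (\<lambda>s. exp (a / 2 * s) * cos (r / 2 * s))
    (\<lambda>s. exp (a / 2 * s) * (a / 2 * cos (r / 2 * s) - r / 2 * sin (r / 2 * s)))"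
proof (rule solves_ode2I)
  show "((\<lambda>s. exp (a / 2 * s) * cos (r / 2 * s)) has_field_derivative
      exp (a / 2 * s) * (a / 2 * cos (r / 2 * s) - r / 2 * sin (r / 2 * s))) (at s)" for s
    by (rule derivative_eq_intros refl | simp)+ (simp add: field_simps)
  show "((\<lambda>s. exp (a / 2 * s) * (a / 2 * cos (r / 2 * s) - r / 2 * sin (r / 2 * s))) has_field_derivative
      exp (a / 2 * s) * ((a * a - r * r) / 4 * cos (r / 2 * s) - a * r / 2 * sin (r / 2 * s))) (at s)" for s
    by (rule derivative_eq_intros refl | simp)+ (simp add: field_simps)
  have c: "c = (r * r + a * a) / 4" using assms by simp
  show "exp (a / 2 * s) * ((a * a - r * r) / 4 * cos (r / 2 * s) - a * r / 2 * sin (r / 2 * s)) =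
      a * (exp (a / 2 * s) * (a / 2 * cos (r / 2 * s) - r / 2 * sin (r / 2 * s)))
      - c * (exp (a / 2 * s) * cos (r / 2 * s))" for s
    unfolding c by (simp add: field_simps)
qed

lemma exp_sin_solves_ode2:
  assumes "r * r = 4 * c - a * a"
  shows "solves_ode2 a c I (\<lambda>s. exp (a / 2 * s) * sin (r / 2 * s))
    (\<lambda>s. exp (a / 2 * s) * (a / 2 * sin (r / 2 * s) + r / 2 * cos (r / 2 * s)))"
proof (rule solves_ode2I)
  show "((\<lambda>s. exp (a / 2 * s) * sin (r / 2 * s)) has_field_derivative
      exp (a / 2 * s) * (a / 2 * sin (r / 2 * s) + r / 2 * cos (r / 2 * s))) (at s)" for s
    by (rule derivative_eq_intros refl | simp)+ (simp add: field_simps)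
  show "((\<lambda>s. exp (a / 2 * s) * (a / 2 * sin (r / 2 * s) + r / 2 * cos (r / 2 * s))) has_field_derivative
      exp (a / 2 * s) * ((a * a - r * r) / 4 * sin (r / 2 * s) + a * r / 2 * cos (r / 2 * s))) (at s)" for s
    by (rule derivative_eq_intros refl | simp)+ (simp add: field_simps)
  have c: "c = (r * r + a * a) / 4" using assms by simp
  show "exp (a / 2 * s) * ((a * a - r * r) / 4 * sin (r / 2 * s) + a * r / 2 * cos (r / 2 * s)) =
      a * (exp (a / 2 * s) * (a / 2 * sin (r / 2 * s) + r / 2 * cos (r / 2 * s)))
      - c * (exp (a / 2 * s) * sin (r / 2 * s))" for s
    unfolding c by (simp add: field_simps)
qed

lemma ex_solves_ode2_iff_basis:
  assumes I: "is_interval I" "t0 \<in> I"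
    and F: "solves_ode2 a c I F F1" and G: "solves_ode2 a c I G G1"
    and wr: "F t0 * G1 t0 - G t0 * F1 t0 \<noteq> 0"
  shows "(\<exists>W W1. solves_ode2 a c I W W1 \<and> (\<forall>t\<in>I. P t (W t))) \<longleftrightarrow>
    (\<exists>c1 c2. \<forall>t\<in>I. P t (c1 * F t + c2 * G t))"
proof
  assume "\<exists>W W1. solves_ode2 a c I W W1 \<and> (\<forall>t\<in>I. P t (W t))"
  then obtain W W1 where W: "solves_ode2 a c I W W1" and P: "\<forall>t\<in>I. P t (W t)" by blast
  obtain c1 c2 where "\<forall>s\<in>I. W s = c1 * F s + c2 * G s"
    using solves_ode2_basis[OF I F G wr W] by blast
  with P show "\<exists>c1 c2. \<forall>t\<in>I. P t (c1 * F t + c2 * G t)" by auto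
next
  assume "\<exists>c1 c2. \<forall>t\<in>I. P t (c1 * F t + c2 * G t)"
  then obtain c1 c2 where "\<forall>t\<in>I. P t (c1 * F t + c2 * G t)" by blast
  with solves_ode2_lincomb[OF F G, of c1 c2]
  show "\<exists>W W1. solves_ode2 a c I W W1 \<and> (\<forall>t\<in>I. P t (W t))" by blast
qed

lemma ex_solves_ode2_iff_distinct_roots:
  assumes I: "is_interval I" "I \<noteq> {}" and r: "r > 0" "r * r = a * a - 4 * c"
  shows "(\<exists>W W1. solves_ode2 a c I W W1 \<and> (\<forall>t\<in>I. P t (W t))) \<longleftrightarrow>
    (\<exists>c1 c2. \<forall>t\<in>I. P t (c1 * exp ((a + r) / 2 * t) + c2 * exp ((a - r) / 2 * t)))"
proof -
  obtain t0 where t0: "t0 \<in> I" using I(2) by blast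
  have roots: "(a + r) / 2 * ((a + r) / 2) = a * ((a + r) / 2) - c"
    "(a - r) / 2 * ((a - r) / 2) = a * ((a - r) / 2) - c"
    using r(2) by (simp_all add: field_simps)
  have "exp ((a + r) / 2 * t0) * ((a - r) / 2 * exp ((a - r) / 2 * t0))
      - exp ((a - r) / 2 * t0) * ((a + r) / 2 * exp ((a + r) / 2 * t0))
      = - r * (exp ((a + r) / 2 * t0) * exp ((a - r) / 2 * t0))"
    by (simp add: algebra_simps)
  then have "exp ((a + r) / 2 * t0) * ((a - r) / 2 * exp ((a - r) / 2 * t0))
      - exp ((a - r) / 2 * t0) * ((a + r) / 2 * exp ((a + r) / 2 * t0)) \<noteq> 0"
    using r(1) by simp
  from ex_solves_ode2_iff_basis[OF I(1) t0 exp_solves_ode2[OF roots(1)] exp_solves_ode2[OF roots(2)] this]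
  show ?thesis .
qed

lemma ex_solves_ode2_iff_double_root:
  assumes I: "is_interval I" "I \<noteq> {}" and c: "4 * c = a * a"
  shows "(\<exists>W W1. solves_ode2 a c I W W1 \<and> (\<forall>t\<in>I. P t (W t))) \<longleftrightarrow>
    (\<exists>c1 c2. \<forall>t\<in>I. P t (c1 * exp (a / 2 * t) + c2 * t * exp (a / 2 * t)))"
proof -
  obtain t0 where t0: "t0 \<in> I" using I(2) by blast
  have root: "a / 2 * (a / 2) = a * (a / 2) - c" using c by (simp add: field_simps)
  have "exp (a / 2 * t0) * ((1 + a / 2 * t0) * exp (a / 2 * t0)) - t0 * exp (a / 2 * t0) * (a / 2 * exp (a / 2 * t0))
      = exp (a / 2 * t0) * exp (a / 2 * t0)"
    by (simp add: algebra_simps)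
  then have "exp (a / 2 * t0) * ((1 + a / 2 * t0) * exp (a / 2 * t0)) - t0 * exp (a / 2 * t0) * (a / 2 * exp (a / 2 * t0)) \<noteq> 0"
    by simp
  from ex_solves_ode2_iff_basis[OF I(1) t0 exp_solves_ode2[OF root] t_exp_solves_ode2[OF c] this]
  show ?thesis by (simp only: mult.assoc)
qed

lemma ex_solves_ode2_iff_complex_roots:
  assumes I: "is_interval I" "I \<noteq> {}" and r: "r > 0" "r * r = 4 * c - a * a"
  shows "(\<exists>W W1. solves_ode2 a c I W W1 \<and> (\<forall>t\<in>I. P t (W t))) \<longleftrightarrow>
    (\<exists>c1 c2. \<forall>t\<in>I. P t (c1 * exp (a / 2 * t) * cos (r / 2 * t) + c2 * exp (a / 2 * t) * sin (r / 2 * t)))"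
proof -
  obtain t0 where t0: "t0 \<in> I" using I(2) by blast
  define E where "E = exp (a / 2 * t0)"
  define C where "C = cos (r / 2 * t0)"
  define S where "S = sin (r / 2 * t0)"
  have "E * C * (E * (a / 2 * S + r / 2 * C)) - E * S * (E * (a / 2 * C - r / 2 * S))
      = r / 2 * E * E * (S * S + C * C)"
    by (simp add: algebra_simps)
  also have "\<dots> = r / 2 * E * E" unfolding S_def C_def by (simp add: power2_eq_square[symmetric])
  also have "\<dots> \<noteq> 0" using r(1) by (simp add: E_def)
  finally have "E * C * (E * (a / 2 * S + r / 2 * C)) - E * S * (E * (a / 2 * C - r / 2 * S)) \<noteq> 0" .
  from ex_solves_ode2_iff_basis[OF I(1) t0 exp_cos_solves_ode2[OF r(2)] exp_sin_solves_ode2[OF r(2)]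
      this[unfolded E_def C_def S_def]]
  show ?thesis by (simp only: mult.assoc)
qed

section \<open>Logarithmic derivatives\<close>

lemma deriv_cong_on_open:
  assumes "open I" "t \<in> I" "\<forall>s\<in>I. f s = g s"
  shows "deriv f t = deriv g t"
proof (rule deriv_cong_ev)
  show "\<forall>\<^sub>F s in nhds t. f s = g s"
    using eventually_nhds_in_open[OF assms(1,2)] by (rule eventually_mono) (use assms(3) in blast)
qed (rule refl)

definition log_deriv :: "(real \<Rightarrow> real) \<Rightarrow> real \<Rightarrow> real" where
  "log_deriv f t = deriv f t / f t"

lemma log_deriv_cong_on_open:
  assumes "open I" "t \<in> I" "\<forall>s\<in>I. f s = g s"
  shows "log_deriv f t = log_deriv g t"
  using deriv_cong_on_open[OF assms] assms(2,3) by (simp add: log_deriv_def)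

lemma DERIV_log_deriv:
  assumes "f t \<noteq> 0" "f differentiable (at t)" "deriv f differentiable (at t)"
  shows "(log_deriv f has_field_derivative deriv (log_deriv f) t) (at t)"
proof -
  have "(deriv f has_field_derivative deriv (deriv f) t) (at t)" "(f has_field_derivative deriv f t) (at t)"
    using assms(2,3) by (simp_all add: DERIV_deriv_iff_real_differentiable)
  from DERIV_divide[OF this assms(1)]
  have "\<exists>D. (log_deriv f has_field_derivative D) (at t)" unfolding log_deriv_def[abs_def] by blast
  then show ?thesis by (simp add: DERIV_deriv_iff_has_field_derivative)
qed

lemma DERIV_powr_log_deriv:
  assumes "f t > 0" "(f has_field_derivative deriv f t) (at t)"
  shows "((\<lambda>s. f s powr r) has_field_derivative r * log_deriv f t * f t powr r) (at t)"
proof -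
  have "r * f t powr (r - real 1) * deriv f t = r * log_deriv f t * f t powr r"
    using assms(1) by (simp add: powr_diff log_deriv_def)
  with DERIV_fun_powr[OF assms(2,1), of r] show ?thesis by metis
qed

lemma log_deriv_exp:
  assumes "C \<noteq> 0"
  shows "log_deriv (\<lambda>s. C * exp (a * s)) t = a"
proof -
  have "((\<lambda>s. C * exp (a * s)) has_field_derivative C * (a * exp (a * t))) (at t)"
    by (auto intro!: derivative_eq_intros)
  then show ?thesis using assms by (simp add: log_deriv_def DERIV_imp_deriv)
qed

lemma log_deriv_const_iff_exp:
  assumes I: "is_interval I" "open I" and f: "\<forall>s\<in>I. f s > 0 \<and> f differentiable (at s)"
  shows "(\<forall>t\<in>I. log_deriv f t = a) \<longleftrightarrow> (\<exists>C. \<forall>t\<in>I. f t = C * exp (a * t))"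
proof
  assume a: "\<forall>t\<in>I. log_deriv f t = a"
  have "(f has_field_derivative a * f s) (at s)" if s: "s \<in> I" for s
  proof -
    have "deriv f s = a * f s" using a f s by (auto simp: log_deriv_def divide_eq_eq)
    then show ?thesis using f s by (metis DERIV_deriv_iff_real_differentiable)
  qed
  then have "\<forall>s\<in>I. (f has_field_derivative a * f s) (at s)" ..
  then show "\<exists>C. \<forall>t\<in>I. f t = C * exp (a * t)" by (rule first_order_linear_ode_on[OF I(1)])
next
  assume "\<exists>C. \<forall>t\<in>I. f t = C * exp (a * t)"
  then obtain C where C: "\<forall>t\<in>I. f t = C * exp (a * t)" ..
  show "\<forall>t\<in>I. log_deriv f t = a"
  proof
    fix t assume t: "t \<in> I"
    then have "C \<noteq> 0" using C f by force
    with log_deriv_cong_on_open[OF I(2) t C] show "log_deriv f t = a" by (simp add: log_deriv_exp)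
  qed
qed

lemma log_deriv_powr_on:
  assumes I: "open I" and t: "t \<in> I"
    and U: "\<forall>s\<in>I. f s = U s powr k \<and> U s > 0 \<and> (U has_field_derivative U1 s) (at s)
              \<and> (U1 has_field_derivative U2 s) (at s)"
  shows "log_deriv f t = k * U1 t / U t"
    and "deriv (log_deriv f) t = k * (U2 t * U t - U1 t * U1 t) / (U t * U t)"
proof -
  have ld: "log_deriv f s = k * U1 s / U s" if s: "s \<in> I" for s
  proof -
    have pos: "U s > 0" and "(U has_field_derivative U1 s) (at s)" using U s by auto
    then have "((\<lambda>s. U s powr k) has_field_derivative k * U s powr (k - real 1) * U1 s) (at s)"
      by (intro DERIV_fun_powr)
    then have "deriv f s = k * U s powr (k - 1) * U1 s"
      using deriv_cong_on_open[OF I s, of f "\<lambda>s. U s powr k"] U by (simp add: DERIV_imp_deriv)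
    then show ?thesis using pos U s by (simp add: log_deriv_def powr_diff)
  qed
  then show "log_deriv f t = k * U1 t / U t" using t .
  have "((\<lambda>s. k * (U1 s / U s)) has_field_derivative k * ((U2 t * U t - U1 t * U1 t) / (U t * U t))) (at t)"
    using U t by (intro DERIV_cmult DERIV_divide) auto
  moreover have "deriv (log_deriv f) t = deriv (\<lambda>s. k * (U1 s / U s)) t"
    using deriv_cong_on_open[OF I t] ld by simp
  ultimately show "deriv (log_deriv f) t = k * (U2 t * U t - U1 t * U1 t) / (U t * U t)"
    by (simp add: DERIV_imp_deriv)
qed

section \<open>Curvature of the multiply warped metric\<close>

lemma UNIV_4: "(UNIV::4 set) = {0, 1, 2, 3}"
proof -
  have "x \<in> {0, 1, 2, 3}" for x :: 4 using exhaust_4[of x] by auto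
  then show ?thesis by blast
qed

lemma sum_UNIV_4: "sum f (UNIV::4 set) = f 0 + f 1 + f 2 + f 3"
  unfolding UNIV_4 by (simp add: ac_simps)

lemma all_4: "(\<forall>i::4. P i) \<longleftrightarrow> P 0 \<and> P 1 \<and> P 2 \<and> P 3"
  by (metis UNIV_4 UNIV_I empty_iff insert_iff)

definition time_point :: "real \<Rightarrow> real^4" where
  "time_point t = (\<chi> i. if i = 0 then t else 0)"

lemma time_point_0 [simp]: "time_point t $ 0 = t"
  by (simp add: time_point_def)

lemma pd_time_function:
  assumes "\<And>y. f y = F (y $ 0)"
  shows "pd f i x = (if i = 0 then deriv F (x $ 0) else 0)"
proof (cases "i = 0")
  case True
  have "pd f i x = deriv (\<lambda>s. F (s + x $ 0)) 0"
    unfolding pd_def assms using True by (simp add: axis_def add.commute)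
  also have "\<dots> = deriv F (x $ 0)"
    unfolding deriv_def using DERIV_shift[of F _ 0 "x $ 0"] by simp
  finally show ?thesis using True by simp
next
  case False
  have "pd f i x = deriv (\<lambda>s. F (x $ 0)) 0"
    unfolding pd_def assms using False by (simp add: axis_def)
  also have "\<dots> = 0" by simp
  finally show ?thesis using False by simp
qed

lemma matrix_inv_unique:
  fixes A B :: "real^'n^'n"
  assumes AB: "A ** B = mat 1" and BA: "B ** A = mat 1"
  shows "matrix_inv A = B"
proof -
  have "\<exists>B'. A ** B' = mat 1 \<and> B' ** A = mat 1" using assms by blast
  then have C: "A ** matrix_inv A = mat 1" "matrix_inv A ** A = mat 1"
    unfolding matrix_inv_def by (metis (mono_tags, lifting) someI_ex)+
  have "matrix_inv A = matrix_inv A ** (A ** B)" using AB by (simp add: matrix_mul_rid)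
  also have "\<dots> = B" using C by (simp add: matrix_mul_assoc matrix_mul_lid)
  finally show ?thesis .
qed

definition warp_exponent :: "real \<Rightarrow> real \<Rightarrow> real \<Rightarrow> 4 \<Rightarrow> real" where
  "warp_exponent p1 p2 p3 i = (if i = 1 then p1 else if i = 2 then p2 else if i = 3 then p3 else 0)"

lemma pd_warped_metric:
  "pd (\<lambda>y. warped_metric \<phi> p1 p2 p3 y j l) i x =
     (if i = 0 then deriv (\<lambda>s. warped_metric \<phi> p1 p2 p3 (time_point s) j l) (x $ 0) else 0)"
  by (rule pd_time_function) (simp add: warped_metric_def)

lemma ginv_warped_metric_time_point:
  "ginv (warped_metric \<phi> p1 p2 p3) y = ginv (warped_metric \<phi> p1 p2 p3) (time_point (y $ 0))"
proof -
  have "gmat (warped_metric \<phi> p1 p2 p3) y = gmat (warped_metric \<phi> p1 p2 p3) (time_point (y $ 0))"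
    unfolding gmat_def vec_eq_iff by (simp add: warped_metric_def)
  then show ?thesis unfolding ginv_def by simp
qed

lemma ssm_conn_warped_metric_time_point:
  "ssm_conn (warped_metric \<phi> p1 p2 p3) dt_field y k i j =
   ssm_conn (warped_metric \<phi> p1 p2 p3) dt_field (time_point (y $ 0)) k i j"
  unfolding ssm_conn_def christoffel_def pd_warped_metric ginv_warped_metric_time_point[of \<phi> p1 p2 p3 y]
  by (simp add: warped_metric_def dt_field_def sum_UNIV_4)

lemma pd_ssm_conn_warped_metric:
  "pd (\<lambda>y. ssm_conn (warped_metric \<phi> p1 p2 p3) dt_field y l j k) i x =
   (if i = 0 then deriv (\<lambda>s. ssm_conn (warped_metric \<phi> p1 p2 p3) dt_field (time_point s) l j k) (x $ 0)
    else 0)"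
  by (rule pd_time_function) (rule ssm_conn_warped_metric_time_point)

lemma ginv_warped_metric:
  assumes "\<phi> t > 0"
  shows "ginv (warped_metric \<phi> p1 p2 p3) (time_point t) k l =
    (if k = l then (if k = 0 then -1 else 1 / \<phi> t powr (2 * warp_exponent p1 p2 p3 k)) else 0)"
proof -
  define B :: "real^4^4" where
    "B = (\<chi> k l. if k = l then (if k = 0 then -1 else 1 / \<phi> t powr (2 * warp_exponent p1 p2 p3 k)) else 0)"
  have nz: "\<phi> t \<noteq> 0" "\<phi> t powr r \<noteq> 0" for r using assms by auto
  have "gmat (warped_metric \<phi> p1 p2 p3) (time_point t) ** B = mat 1"
    "B ** gmat (warped_metric \<phi> p1 p2 p3) (time_point t) = mat 1"
    unfolding vec_eq_iff all_4 matrix_matrix_mult_def mat_def gmat_def B_def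
    by (simp_all add: sum_UNIV_4 warped_metric_def warp_exponent_def nz)
  then have "matrix_inv (gmat (warped_metric \<phi> p1 p2 p3) (time_point t)) = B" by (rule matrix_inv_unique)
  then show ?thesis unfolding ginv_def by (simp add: B_def)
qed

lemma deriv_warped_metric:
  assumes "\<phi> t > 0" and "(\<phi> has_field_derivative deriv \<phi> t) (at t)"
  shows "deriv (\<lambda>s. warped_metric \<phi> p1 p2 p3 (time_point s) j l) t =
    (if j = l \<and> j \<noteq> 0
     then 2 * warp_exponent p1 p2 p3 j * log_deriv \<phi> t * \<phi> t powr (2 * warp_exponent p1 p2 p3 j) else 0)"
proof (cases "j = l \<and> j \<noteq> 0")
  case True
  then have eq: "(\<lambda>s. warped_metric \<phi> p1 p2 p3 (time_point s) j l) = (\<lambda>s. \<phi> s powr (2 * warp_exponent p1 p2 p3 j))"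
    using exhaust_4[of j] by (auto simp: warped_metric_def warp_exponent_def fun_eq_iff)
  from True have "j \<noteq> 0" by blast
  then show ?thesis unfolding eq
    using True DERIV_imp_deriv[OF DERIV_powr_log_deriv[OF assms]] by simp
next
  case False
  then have eq: "(\<lambda>s. warped_metric \<phi> p1 p2 p3 (time_point s) j l) = (\<lambda>s. if j = l then -1 else 0)"
    by (auto simp: warped_metric_def fun_eq_iff)
  show ?thesis unfolding eq using False by auto
qed

definition warped_conn :: "(real \<Rightarrow> real) \<Rightarrow> real \<Rightarrow> real \<Rightarrow> real \<Rightarrow> 4 \<Rightarrow> 4 \<Rightarrow> 4 \<Rightarrow> real \<Rightarrow> real" where
  "warped_conn \<phi> p1 p2 p3 k i j s =
    (if k \<noteq> 0 \<and> i = k \<and> j = 0 then warp_exponent p1 p2 p3 k * log_deriv \<phi> s - 1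
     else if k \<noteq> 0 \<and> i = 0 \<and> j = k then warp_exponent p1 p2 p3 k * log_deriv \<phi> s
     else if k = 0 \<and> i \<noteq> 0 \<and> j = i
       then \<phi> s powr (2 * warp_exponent p1 p2 p3 i) * (warp_exponent p1 p2 p3 i * log_deriv \<phi> s - 1)
     else 0)"

lemma ssm_conn_warped_metric:
  assumes "\<phi> t > 0" and "(\<phi> has_field_derivative deriv \<phi> t) (at t)"
  shows "ssm_conn (warped_metric \<phi> p1 p2 p3) dt_field (time_point t) k i j = warped_conn \<phi> p1 p2 p3 k i j t"
proof -
  have "\<forall>k i j. ssm_conn (warped_metric \<phi> p1 p2 p3) dt_field (time_point t) k i j = warped_conn \<phi> p1 p2 p3 k i j t"
    unfolding all_4 ssm_conn_def christoffel_def pd_warped_metric time_point_0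
      ginv_warped_metric[of \<phi> t, OF assms(1)] deriv_warped_metric[OF assms]
    using assms(1)
    by (simp add: sum_UNIV_4 warped_metric_def dt_field_def warped_conn_def warp_exponent_def field_simps)
  then show ?thesis by blast
qed

definition warped_conn_deriv :: "(real \<Rightarrow> real) \<Rightarrow> real \<Rightarrow> real \<Rightarrow> real \<Rightarrow> 4 \<Rightarrow> 4 \<Rightarrow> 4 \<Rightarrow> real \<Rightarrow> real" where
  "warped_conn_deriv \<phi> p1 p2 p3 k i j t =
    (if k \<noteq> 0 \<and> i = k \<and> j = 0 then warp_exponent p1 p2 p3 k * deriv (log_deriv \<phi>) t
     else if k \<noteq> 0 \<and> i = 0 \<and> j = k then warp_exponent p1 p2 p3 k * deriv (log_deriv \<phi>) t
     else if k = 0 \<and> i \<noteq> 0 \<and> j = i then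
        2 * warp_exponent p1 p2 p3 i * log_deriv \<phi> t * \<phi> t powr (2 * warp_exponent p1 p2 p3 i)
          * (warp_exponent p1 p2 p3 i * log_deriv \<phi> t - 1)
        + \<phi> t powr (2 * warp_exponent p1 p2 p3 i) * (warp_exponent p1 p2 p3 i * deriv (log_deriv \<phi>) t)
     else 0)"

text \<open>Every coefficient has the shape a v + b + c phi^r v + e phi^r with v = log_deriv phi.\<close>
lemma DERIV_warped_conn:
  assumes pos: "\<phi> t > 0" and d1: "\<phi> differentiable (at t)" and d2: "deriv \<phi> differentiable (at t)"
  shows "(warped_conn \<phi> p1 p2 p3 k i j has_field_derivative warped_conn_deriv \<phi> p1 p2 p3 k i j t) (at t)"
proof -
  define c1 where "c1 = (k \<noteq> 0 \<and> i = k \<and> j = 0)"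
  define c2 where "c2 = (k \<noteq> 0 \<and> i = 0 \<and> j = k)"
  define c3 where "c3 = (k = 0 \<and> i \<noteq> 0 \<and> j = i)"
  define r where "r = 2 * warp_exponent p1 p2 p3 i"
  define a where "a = (if c1 \<or> c2 then warp_exponent p1 p2 p3 k else 0)"
  define b where "b = (if c1 then -1 else (0::real))"
  define c where "c = (if \<not> c1 \<and> \<not> c2 \<and> c3 then warp_exponent p1 p2 p3 i else 0)"
  define e where "e = (if \<not> c1 \<and> \<not> c2 \<and> c3 then -1 else (0::real))"
  have eq: "warped_conn \<phi> p1 p2 p3 k i j =
     (\<lambda>s. a * log_deriv \<phi> s + b + c * (\<phi> s powr r * log_deriv \<phi> s) + e * \<phi> s powr r)"
    unfolding fun_eq_iff warped_conn_def a_def b_def c_def e_def c1_def c2_def c3_def r_def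
    by (auto simp: algebra_simps)
  have D1: "(\<phi> has_field_derivative deriv \<phi> t) (at t)"
    using d1 by (simp add: DERIV_deriv_iff_real_differentiable)
  have D: "((\<lambda>s. a * log_deriv \<phi> s + b + c * (\<phi> s powr r * log_deriv \<phi> s) + e * \<phi> s powr r)
      has_field_derivative
      a * deriv (log_deriv \<phi>) t + 0
      + c * ((r * log_deriv \<phi> t * \<phi> t powr r) * log_deriv \<phi> t + deriv (log_deriv \<phi>) t * \<phi> t powr r)
      + e * (r * log_deriv \<phi> t * \<phi> t powr r)) (at t)"
    using DERIV_log_deriv[OF _ d1 d2] pos
    by (intro DERIV_add DERIV_cmult DERIV_mult DERIV_const DERIV_powr_log_deriv[OF pos D1]) auto
  have "a * deriv (log_deriv \<phi>) t + 0
      + c * ((r * log_deriv \<phi> t * \<phi> t powr r) * log_deriv \<phi> t + deriv (log_deriv \<phi>) t * \<phi> t powr r)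
      + e * (r * log_deriv \<phi> t * \<phi> t powr r) = warped_conn_deriv \<phi> p1 p2 p3 k i j t"
    unfolding warped_conn_deriv_def a_def b_def c_def e_def c1_def c2_def c3_def r_def
    by (auto simp: algebra_simps)
  with D show ?thesis unfolding eq by simp
qed

lemma deriv_ssm_conn_warped_metric:
  assumes "open I" "t \<in> I"
    and \<phi>: "\<forall>s\<in>I. \<phi> s > 0 \<and> \<phi> differentiable (at s)" and d2: "deriv \<phi> differentiable (at t)"
  shows "deriv (\<lambda>s. ssm_conn (warped_metric \<phi> p1 p2 p3) dt_field (time_point s) l j k) t =
    warped_conn_deriv \<phi> p1 p2 p3 l j k t"
proof -
  have "\<forall>s\<in>I. ssm_conn (warped_metric \<phi> p1 p2 p3) dt_field (time_point s) l j k = warped_conn \<phi> p1 p2 p3 l j k s"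
    using \<phi> ssm_conn_warped_metric by (auto simp: DERIV_deriv_iff_real_differentiable)
  from deriv_cong_on_open[OF assms(1,2) this]
  have "deriv (\<lambda>s. ssm_conn (warped_metric \<phi> p1 p2 p3) dt_field (time_point s) l j k) t =
      deriv (warped_conn \<phi> p1 p2 p3 l j k) t" .
  also have "\<dots> = warped_conn_deriv \<phi> p1 p2 p3 l j k t"
    by (rule DERIV_imp_deriv, rule DERIV_warped_conn) (use \<phi> d2 assms(2) in auto)
  finally show ?thesis .
qed

definition warped_scalar :: "real \<Rightarrow> real \<Rightarrow> (real \<Rightarrow> real) \<Rightarrow> real \<Rightarrow> real" where
  "warped_scalar z e \<phi> t =
     - 2 * z * deriv (log_deriv \<phi>) t - (e + z\<^sup>2) * (log_deriv \<phi> t)\<^sup>2 + 6 * z * log_deriv \<phi> t - 6"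

lemma ssm_scalar_warped_metric:
  assumes "open I" and x0: "x $ 0 \<in> I"
    and \<phi>: "\<forall>s\<in>I. \<phi> s > 0 \<and> \<phi> differentiable (at s)" and d2: "deriv \<phi> differentiable (at (x $ 0))"
  shows "ssm_scalar (warped_metric \<phi> p1 p2 p3) dt_field x =
    warped_scalar (p1 + p2 + p3) (p1\<^sup>2 + p2\<^sup>2 + p3\<^sup>2) \<phi> (x $ 0)"
proof -
  define t where "t = x $ 0"
  have pos: "\<phi> t > 0" and D1: "(\<phi> has_field_derivative deriv \<phi> t) (at t)"
    using \<phi> x0 by (auto simp: t_def DERIV_deriv_iff_real_differentiable)
  have c: "ssm_conn (warped_metric \<phi> p1 p2 p3) dt_field x l j k = warped_conn \<phi> p1 p2 p3 l j k t" for l j k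
    using ssm_conn_warped_metric_time_point[of \<phi> p1 p2 p3 x] ssm_conn_warped_metric[OF pos D1] t_def by simp
  have g: "ginv (warped_metric \<phi> p1 p2 p3) x k l =
    (if k = l then (if k = 0 then -1 else 1 / \<phi> t powr (2 * warp_exponent p1 p2 p3 k)) else 0)" for k l
    using ginv_warped_metric_time_point[of \<phi> p1 p2 p3 x] ginv_warped_metric[of \<phi> t, OF pos] t_def by simp
  have d: "deriv (\<lambda>s. ssm_conn (warped_metric \<phi> p1 p2 p3) dt_field (time_point s) l j k) t =
      warped_conn_deriv \<phi> p1 p2 p3 l j k t" for l j k
    using deriv_ssm_conn_warped_metric[OF assms(1) x0 \<phi> d2] t_def by simp
  have nz: "\<phi> t powr r \<noteq> 0" for r using pos by simp
  show ?thesis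
    unfolding ssm_scalar_def ssm_ricci_def ssm_curv_def pd_ssm_conn_warped_metric c g d t_def[symmetric]
    apply (simp add: sum_UNIV_4 warped_conn_def warped_conn_deriv_def warp_exponent_def)
    using pos apply (simp add: nz field_simps)
    apply (simp add: warped_scalar_def algebra_simps power2_eq_square)
    done
qed

lemma ssm_scalar_warped_metric_const_iff:
  assumes "open I" and \<phi>: "\<forall>s\<in>I. \<phi> s > 0 \<and> \<phi> differentiable (at s) \<and> deriv \<phi> differentiable (at s)"
  shows "(\<forall>x::real^4. x $ 0 \<in> I \<longrightarrow> ssm_scalar (warped_metric \<phi> p1 p2 p3) dt_field x = S) \<longleftrightarrow>
    (\<forall>t\<in>I. warped_scalar (p1 + p2 + p3) (p1\<^sup>2 + p2\<^sup>2 + p3\<^sup>2) \<phi> t = S)"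
proof -
  have scalar: "ssm_scalar (warped_metric \<phi> p1 p2 p3) dt_field x =
      warped_scalar (p1 + p2 + p3) (p1\<^sup>2 + p2\<^sup>2 + p3\<^sup>2) \<phi> (x $ 0)" if "x $ 0 \<in> I" for x
    by (rule ssm_scalar_warped_metric[OF assms(1) that]) (use \<phi> that in auto)
  show ?thesis
  proof
    assume "\<forall>x::real^4. x $ 0 \<in> I \<longrightarrow> ssm_scalar (warped_metric \<phi> p1 p2 p3) dt_field x = S"
    then show "\<forall>t\<in>I. warped_scalar (p1 + p2 + p3) (p1\<^sup>2 + p2\<^sup>2 + p3\<^sup>2) \<phi> t = S"
      using scalar[of "time_point t" for t] by simp
  qed (simp add: scalar)
qed

section \<open>Constant scalar curvature\<close>

lemma continuous_on_log_deriv: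
  assumes "\<forall>s\<in>I. f s \<noteq> 0 \<and> f differentiable (at s) \<and> deriv f differentiable (at s)"
  shows "continuous_on I (log_deriv f)"
  using assms DERIV_log_deriv DERIV_isCont by (blast intro: continuous_at_imp_continuous_on)

lemma power2_eq_iff_sign_sqrt:
  fixes a q :: real
  shows "a\<^sup>2 = q \<longleftrightarrow> q \<ge> 0 \<and> (\<exists>\<sigma>\<in>{1, -1}. a = \<sigma> * sqrt q)"
proof
  assume "a\<^sup>2 = q"
  then have "q \<ge> 0" "sqrt q = \<bar>a\<bar>" by auto
  then show "q \<ge> 0 \<and> (\<exists>\<sigma>\<in>{1, -1}. a = \<sigma> * sqrt q)" by (cases "a \<ge> 0") auto
qed (auto simp: power_mult_distrib)

lemma warped_scalar_zero_sum_iff_log_deriv_const: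
  assumes I: "is_interval I" "I \<noteq> {}"
    and \<phi>: "\<forall>s\<in>I. \<phi> s > 0 \<and> \<phi> differentiable (at s) \<and> deriv \<phi> differentiable (at s)"
    and e: "e > 0"
  shows "(\<forall>t\<in>I. warped_scalar 0 e \<phi> t = S) \<longleftrightarrow>
    (\<exists>a. a\<^sup>2 = - (S + 6) / e \<and> (\<forall>t\<in>I. log_deriv \<phi> t = a))"
proof -
  define q where "q = - (S + 6) / e"
  have "(\<forall>t\<in>I. warped_scalar 0 e \<phi> t = S) \<longleftrightarrow> (\<forall>t\<in>I. (log_deriv \<phi> t)\<^sup>2 = q)"
    using e by (auto simp: warped_scalar_def q_def field_simps)
  also have "\<dots> \<longleftrightarrow> (\<exists>a. a\<^sup>2 = q \<and> (\<forall>t\<in>I. log_deriv \<phi> t = a))"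
  proof
    assume sq: "\<forall>t\<in>I. (log_deriv \<phi> t)\<^sup>2 = q"
    have "continuous_on I (log_deriv \<phi>)"
      using \<phi> by (intro continuous_on_log_deriv) auto
    moreover have "finite (log_deriv \<phi> ` I)"
    proof (rule finite_subset)
      show "log_deriv \<phi> ` I \<subseteq> {sqrt q, - sqrt q}"
        using sq power2_eq_iff_sign_sqrt by fastforce
    qed simp
    ultimately have "log_deriv \<phi> constant_on I"
      using I(1) is_interval_connected continuous_finite_range_constant by blast
    then obtain a where "\<forall>t\<in>I. log_deriv \<phi> t = a" by (auto simp: constant_on_def)
    with sq I(2) show "\<exists>a. a\<^sup>2 = q \<and> (\<forall>t\<in>I. log_deriv \<phi> t = a)" by force
  qed auto
  finally show ?thesis unfolding q_def .
qed

lemma warped_scalar_zero_sum_const_iff: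
  assumes I: "is_interval I" "open I" "I \<noteq> {}"
    and \<phi>: "\<forall>s\<in>I. \<phi> s > 0 \<and> \<phi> differentiable (at s) \<and> deriv \<phi> differentiable (at s)"
    and e: "e > 0"
  shows "(\<forall>t\<in>I. warped_scalar 0 e \<phi> t = S) \<longleftrightarrow>
    (S + 6 = 0 \<and> (\<exists>c. \<forall>t\<in>I. \<phi> t = c))
    \<or> (S + 6 < 0 \<and> (\<exists>c0. \<exists>\<sigma>\<in>{1, -1::real}. \<forall>t\<in>I. \<phi> t = c0 * exp (\<sigma> * sqrt (- (S + 6) / e) * t)))"
    (is "_ \<longleftrightarrow> ?R")
proof -
  have "(\<forall>t\<in>I. warped_scalar 0 e \<phi> t = S) \<longleftrightarrow>
      (\<exists>a. a\<^sup>2 = - (S + 6) / e \<and> (\<exists>C. \<forall>t\<in>I. \<phi> t = C * exp (a * t)))"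
    using warped_scalar_zero_sum_iff_log_deriv_const[OF I(1,3) \<phi> e] log_deriv_const_iff_exp[OF I(1,2)] \<phi>
    by simp
  also have "\<dots> \<longleftrightarrow> - (S + 6) / e \<ge> 0 \<and>
      (\<exists>\<sigma>\<in>{1, -1::real}. \<exists>C. \<forall>t\<in>I. \<phi> t = C * exp (\<sigma> * sqrt (- (S + 6) / e) * t))"
    unfolding power2_eq_iff_sign_sqrt by blast
  also have "\<dots> \<longleftrightarrow> ?R"
  proof (cases "S + 6 = 0")
    case False
    with e show ?thesis by (auto simp: divide_nonneg_pos zero_le_divide_iff)
  qed auto
  finally show ?thesis .
qed

lemma warped_scalar_powr_iff:
  fixes z e S u u1 u2 :: real
  assumes z: "z \<noteq> 0" and e: "e \<ge> 0" and u: "u > 0"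
  defines "k \<equiv> 2 * z / (e + z\<^sup>2)"
  shows "- 2 * z * (k * (u2 * u - u1 * u1) / (u * u)) - (e + z\<^sup>2) * (k * u1 / u)\<^sup>2 + 6 * z * (k * u1 / u) - 6 = S
    \<longleftrightarrow> u2 = 3 * u1 - (S + 6) * (e + z\<^sup>2) / (4 * z\<^sup>2) * u"
proof -
  have ez: "e + z\<^sup>2 > 0" using z e by (simp add: add_nonneg_pos)
  have ke: "k * (e + z\<^sup>2) = 2 * z" using ez by (simp add: k_def)
  have kk: "(e + z\<^sup>2) * k * k = 2 * z * k" by (metis ke mult.commute)
  have zk: "2 * z * k = 4 * z\<^sup>2 / (e + z\<^sup>2)" by (simp add: k_def power2_eq_square)
  then have zk0: "2 * z * k \<noteq> 0" using ez z by simp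
  have "- 2 * z * (k * (u2 * u - u1 * u1) / (u * u)) - (e + z\<^sup>2) * (k * u1 / u)\<^sup>2 + 6 * z * (k * u1 / u) - 6
      = - 2 * z * k * (u2 - 3 * u1) / u - 6 + (u1 / u)\<^sup>2 * (2 * z * k - (e + z\<^sup>2) * k * k)"
    using u by (simp add: field_simps power2_eq_square)
  also have "\<dots> = - 2 * z * k * (u2 - 3 * u1) / u - 6" by (simp add: kk)
  finally have E: "- 2 * z * (k * (u2 * u - u1 * u1) / (u * u)) - (e + z\<^sup>2) * (k * u1 / u)\<^sup>2 + 6 * z * (k * u1 / u) - 6
      = - 2 * z * k * (u2 - 3 * u1) / u - 6" .
  have "- 2 * z * k * (u2 - 3 * u1) / u - 6 = S \<longleftrightarrow> (u2 - 3 * u1) = - ((S + 6) / (2 * z * k)) * u"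
    using u zk0 by (auto simp: field_simps)
  then have "- 2 * z * (k * (u2 * u - u1 * u1) / (u * u)) - (e + z\<^sup>2) * (k * u1 / u)\<^sup>2 + 6 * z * (k * u1 / u) - 6 = S
      \<longleftrightarrow> u2 = 3 * u1 - (S + 6) / (2 * z * k) * u"
    unfolding E by linarith
  moreover have "(S + 6) / (2 * z * k) = (S + 6) * (e + z\<^sup>2) / (4 * z\<^sup>2)"
    unfolding zk by simp
  ultimately show ?thesis by simp
qed

lemma warped_scalar_powr_on:
  assumes I: "open I" "t \<in> I" and z: "z \<noteq> 0" and e: "e \<ge> 0"
    and U: "\<forall>s\<in>I. \<phi> s = U s powr (2 * z / (e + z\<^sup>2)) \<and> U s > 0 \<and> (U has_field_derivative U1 s) (at s)
              \<and> (U1 has_field_derivative U2 s) (at s)"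
  shows "warped_scalar z e \<phi> t = S \<longleftrightarrow> U2 t = 3 * U1 t - (S + 6) * (e + z\<^sup>2) / (4 * z\<^sup>2) * U t"
  unfolding warped_scalar_def log_deriv_powr_on[OF I U]
  by (rule warped_scalar_powr_iff[OF z e]) (use U I(2) in blast)

lemma warped_scalar_const_iff_ode2:
  fixes S :: real
  assumes I: "open I" and z: "z \<noteq> 0" and e: "e \<ge> 0"
    and \<phi>: "\<forall>s\<in>I. \<phi> s > 0 \<and> \<phi> differentiable (at s) \<and> deriv \<phi> differentiable (at s)"
  defines "k \<equiv> 2 * z / (e + z\<^sup>2)" and "c \<equiv> (S + 6) * (e + z\<^sup>2) / (4 * z\<^sup>2)"
  shows "(\<forall>t\<in>I. warped_scalar z e \<phi> t = S) \<longleftrightarrow>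
    (\<exists>U U1. solves_ode2 3 c I U U1 \<and> (\<forall>t\<in>I. U t > 0 \<and> \<phi> t = U t powr k))"
proof
  assume S: "\<forall>t\<in>I. warped_scalar z e \<phi> t = S"
  have "e + z\<^sup>2 > 0" using z e by (simp add: add_nonneg_pos)
  then have k: "k \<noteq> 0" using z by (simp add: k_def)
  define U where "U s = \<phi> s powr (1 / k)" for s
  define U1 where "U1 s = 1 / k * log_deriv \<phi> s * U s" for s
  define U2 where "U2 s = 1 / k * (deriv (log_deriv \<phi>) s * U s + U1 s * log_deriv \<phi> s)" for s
  have U: "\<phi> s = U s powr k \<and> U s > 0 \<and> (U has_field_derivative U1 s) (at s)
      \<and> (U1 has_field_derivative U2 s) (at s)" if s: "s \<in> I" for s
  proof (intro conjI)
    have pos: "\<phi> s > 0" and d1: "(\<phi> has_field_derivative deriv \<phi> s) (at s)"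
      using \<phi> s by (auto simp: DERIV_deriv_iff_real_differentiable)
    show "\<phi> s = U s powr k" "U s > 0" using pos k by (simp_all add: U_def powr_powr)
    show dU: "(U has_field_derivative U1 s) (at s)"
      using DERIV_powr_log_deriv[OF pos d1, of "1 / k"] by (simp add: U_def[abs_def] U1_def)
    have "(log_deriv \<phi> has_field_derivative deriv (log_deriv \<phi>) s) (at s)"
      using \<phi> s by (intro DERIV_log_deriv) auto
    from DERIV_cmult[OF DERIV_mult[OF this dU], of "1 / k"]
    show "(U1 has_field_derivative U2 s) (at s)"
      by (simp add: U1_def[abs_def] U2_def mult.assoc)
  qed
  have "U2 s = 3 * U1 s - c * U s" if "s \<in> I" for s
    using warped_scalar_powr_on[OF I that z e, of \<phi> U U1 U2 S] U S that by (simp add: k_def c_def)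
  then have "solves_ode2 3 c I U U1" using U by (simp add: solves_ode2_def)
  then show "\<exists>U U1. solves_ode2 3 c I U U1 \<and> (\<forall>t\<in>I. U t > 0 \<and> \<phi> t = U t powr k)"
    using U by blast
next
  assume "\<exists>U U1. solves_ode2 3 c I U U1 \<and> (\<forall>t\<in>I. U t > 0 \<and> \<phi> t = U t powr k)"
  then obtain U U1 where sol: "solves_ode2 3 c I U U1" and U: "\<forall>t\<in>I. U t > 0 \<and> \<phi> t = U t powr k"
    by blast
  show "\<forall>t\<in>I. warped_scalar z e \<phi> t = S"
  proof
    fix t assume "t \<in> I"
    with warped_scalar_powr_on[OF I this z e, of \<phi> U U1 "\<lambda>s. 3 * U1 s - c * U s" S] sol U
    show "warped_scalar z e \<phi> t = S" by (simp add: solves_ode2_def k_def c_def)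
  qed
qed

lemma warped_scalar_const_iff:
  assumes I: "is_interval I" "open I" "I \<noteq> {}"
    and \<phi>: "\<forall>s\<in>I. \<phi> s > 0 \<and> \<phi> differentiable (at s) \<and> deriv \<phi> differentiable (at s)"
    and z: "z \<noteq> 0" and e: "e \<ge> 0"
  shows "(\<forall>t\<in>I. warped_scalar z e \<phi> t = S) \<longleftrightarrow>
         ((S + 6 < 9 * z\<^sup>2 / (e + z\<^sup>2) \<and>
            (\<exists>c1 c2. \<forall>t\<in>I.
               let r = sqrt (9 - (S + 6) * (e + z\<^sup>2) / z\<^sup>2);
                   u = c1 * exp ((3 + r) / 2 * t) + c2 * exp ((3 - r) / 2 * t)
               in u > 0 \<and> \<phi> t = u powr (2 * z / (e + z\<^sup>2))))
          \<or> (S + 6 = 9 * z\<^sup>2 / (e + z\<^sup>2) \<and>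
            (\<exists>c1 c2. \<forall>t\<in>I.
               let u = c1 * exp (3 / 2 * t) + c2 * t * exp (3 / 2 * t)
               in u > 0 \<and> \<phi> t = u powr (2 * z / (e + z\<^sup>2))))
          \<or> (S + 6 > 9 * z\<^sup>2 / (e + z\<^sup>2) \<and>
            (\<exists>c1 c2. \<forall>t\<in>I.
               let r = sqrt (-9 + (S + 6) * (e + z\<^sup>2) / z\<^sup>2);
                   u = c1 * exp (3 / 2 * t) * cos (r / 2 * t) + c2 * exp (3 / 2 * t) * sin (r / 2 * t)
               in u > 0 \<and> \<phi> t = u powr (2 * z / (e + z\<^sup>2)))))"
proof -
  define c where "c = (S + 6) * (e + z\<^sup>2) / (4 * z\<^sup>2)"
  define P where "P t u \<longleftrightarrow> u > 0 \<and> \<phi> t = u powr (2 * z / (e + z\<^sup>2))" for t u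
  have ez: "e + z\<^sup>2 > 0" using z e by (simp add: add_nonneg_pos)
  have c4: "(S + 6) * (e + z\<^sup>2) / z\<^sup>2 = 4 * c" unfolding c_def by simp
  have regime: "S + 6 < 9 * z\<^sup>2 / (e + z\<^sup>2) \<longleftrightarrow> 4 * c < 9" "S + 6 = 9 * z\<^sup>2 / (e + z\<^sup>2) \<longleftrightarrow> 4 * c = 9"
    "S + 6 > 9 * z\<^sup>2 / (e + z\<^sup>2) \<longleftrightarrow> 4 * c > 9"
    unfolding c4[symmetric] using z ez by (simp_all add: field_simps)
  have red: "(\<forall>t\<in>I. warped_scalar z e \<phi> t = S) \<longleftrightarrow> (\<exists>U U1. solves_ode2 3 c I U U1 \<and> (\<forall>t\<in>I. P t (U t)))"
    unfolding P_def c_def by (rule warped_scalar_const_iff_ode2[OF I(2) z e \<phi>])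
  consider "4 * c < 9" | "4 * c = 9" | "4 * c > 9" by linarith
  then show ?thesis
  proof cases
    case 1
    define r where "r = sqrt (9 - 4 * c)"
    have "r > 0" "r * r = 3 * 3 - 4 * c" using 1 by (simp_all add: r_def)
    from ex_solves_ode2_iff_distinct_roots[OF I(1,3) this, of P] 1 show ?thesis
      unfolding red regime c4 by (simp add: Let_def P_def r_def)
  next
    case 2
    then have "4 * c = 3 * 3" by simp
    from ex_solves_ode2_iff_double_root[OF I(1,3) this, of P] 2 show ?thesis
      unfolding red regime c4 by (simp add: Let_def P_def)
  next
    case 3
    define r where "r = sqrt (4 * c - 9)"
    have "r > 0" "r * r = 4 * c - 3 * 3" using 3 by (simp_all add: r_def)
    from ex_solves_ode2_iff_complex_roots[OF I(1,3) this, of P] 3 show ?thesis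
      unfolding red regime c4 by (simp add: Let_def P_def r_def)
  qed
qed

theorem theorem4p29:
  fixes I :: "real set" and \<phi> :: "real \<Rightarrow> real" and p1 p2 p3 S :: real
  assumes I: "is_interval I" "open I" "I \<noteq> {}"
    and pos: "\<forall>t\<in>I. \<phi> t > 0"
    and smooth: "\<forall>n. \<forall>t\<in>I. ((deriv ^^ n) \<phi>) differentiable (at t)"
  defines "\<zeta> \<equiv> p1 + p2 + p3"
    and "\<eta> \<equiv> p1\<^sup>2 + p2\<^sup>2 + p3\<^sup>2"
  shows
   "(\<forall>x::real^4. x $ 0 \<in> I \<longrightarrow> ssm_scalar (warped_metric \<phi> p1 p2 p3) dt_field x = S)
    \<longleftrightarrow>
    ((\<zeta> = 0 \<and> \<eta> = 0 \<and> S = -6)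
     \<or> (\<zeta> = 0 \<and> \<eta> \<noteq> 0 \<and>
         ((S + 6 = 0 \<and> (\<exists>c. \<forall>t\<in>I. \<phi> t = c))
          \<or> (S + 6 < 0 \<and> (\<exists>c0. \<exists>\<sigma>\<in>{1, -1::real}.
                \<forall>t\<in>I. \<phi> t = c0 * exp (\<sigma> * sqrt (- (S + 6) / \<eta>) * t)))))
     \<or> (\<zeta> \<noteq> 0 \<and>
         ((S + 6 < 9 * \<zeta>\<^sup>2 / (\<eta> + \<zeta>\<^sup>2) \<and>
            (\<exists>c1 c2. \<forall>t\<in>I.
               let r = sqrt (9 - (S + 6) * (\<eta> + \<zeta>\<^sup>2) / \<zeta>\<^sup>2);
                   u = c1 * exp ((3 + r) / 2 * t) + c2 * exp ((3 - r) / 2 * t)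
               in u > 0 \<and> \<phi> t = u powr (2 * \<zeta> / (\<eta> + \<zeta>\<^sup>2))))
          \<or> (S + 6 = 9 * \<zeta>\<^sup>2 / (\<eta> + \<zeta>\<^sup>2) \<and>
            (\<exists>c1 c2. \<forall>t\<in>I.
               let u = c1 * exp (3 / 2 * t) + c2 * t * exp (3 / 2 * t)
               in u > 0 \<and> \<phi> t = u powr (2 * \<zeta> / (\<eta> + \<zeta>\<^sup>2))))
          \<or> (S + 6 > 9 * \<zeta>\<^sup>2 / (\<eta> + \<zeta>\<^sup>2) \<and>
            (\<exists>c1 c2. \<forall>t\<in>I.
               let r = sqrt (-9 + (S + 6) * (\<eta> + \<zeta>\<^sup>2) / \<zeta>\<^sup>2);
                   u = c1 * exp (3 / 2 * t) * cos (r / 2 * t) + c2 * exp (3 / 2 * t) * sin (r / 2 * t)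
               in u > 0 \<and> \<phi> t = u powr (2 * \<zeta> / (\<eta> + \<zeta>\<^sup>2)))))))"
proof -
  have \<phi>: "\<forall>s\<in>I. \<phi> s > 0 \<and> \<phi> differentiable (at s) \<and> deriv \<phi> differentiable (at s)"
  proof
    fix s assume "s \<in> I"
    then have "(deriv ^^ 0) \<phi> differentiable (at s)" "(deriv ^^ Suc 0) \<phi> differentiable (at s)"
      using smooth by blast+
    with pos \<open>s \<in> I\<close> show "\<phi> s > 0 \<and> \<phi> differentiable (at s) \<and> deriv \<phi> differentiable (at s)" by simp
  qed
  have "(\<forall>x::real^4. x $ 0 \<in> I \<longrightarrow> ssm_scalar (warped_metric \<phi> p1 p2 p3) dt_field x = S)
      \<longleftrightarrow> (\<forall>t\<in>I. warped_scalar \<zeta> \<eta> \<phi> t = S)"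
    unfolding \<zeta>_def \<eta>_def by (rule ssm_scalar_warped_metric_const_iff[OF I(2) \<phi>])
  moreover have "\<eta> \<ge> 0" unfolding \<eta>_def by simp
  ultimately show ?thesis
    using warped_scalar_zero_sum_const_iff[OF I \<phi>, of \<eta> S] warped_scalar_const_iff[OF I \<phi>, of \<zeta> \<eta> S] I(3)
    by (cases "\<zeta> = 0"; cases "\<eta> = 0") (auto simp: warped_scalar_def)
qed

end
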